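(* Let $p,d\in C^{2}([0,\infty),\mathbb{R})$, $b\in C^2([0,\infty),\mathbb{C})$, $c\in C^1([0,\infty),\mathbb{C})$, $q\in C([0,\infty),\mathbb{R})$ with $p>0$ on $[0,\infty)$, and assume: (B1) the (possibly improper) limit $d_\infty:=\lim_{t\to\infty}d(t)\in\mathbb{R}\cup\{\pm\infty\}$ exists; (B2) there are constants $\beta,\gamma>0$ with $|b(t)|\le\beta(|d(t)|+1)$ and $|c(t)|\le\gamma(|d(t)|+1)$ for all $t\ge0$; (B3a) for some $\lambda\in\mathbb{R}\setminus\{d_\infty\}$ there is $t_\lambda\ge0$ with $\lambda\notin d([t_\lambda,\infty))$ and $\pi(\cdot,\lambda)$ bounded on $[t_\lambda,\infty)$; (B3b) for every $\lambda\in\mathbb{R}\setminus(\overline{\Delta([0,\infty))}\cup\{d_\infty\})$ there is $t_\lambda\ge0$ with $\lambda\notin d([t_\lambda,\infty))$ and $\rho(\cdot,\lambda)$, $\kappa(\cdot,\lambda)$, $1/\pi(\cdot,\lambda)$ bounded on $[t_\lambda,\infty)$. Let $\delta_-:=\inf_{t\ge0}\Delta(t)$, $\delta_+:=\sup_{t\ge0}\Delta(t)$. (i) If $d_\infty\in\mathbb{R}$, then $\delta_+\in\mathbb{R}$, and $\overline{\Delta([0,\infty))}=[\delta_-,\delta_+]$ with $\delta_-\in\mathbb{R}$ if $\liminf_{t\to\infty}p(t)>0$, while $\overline{\Delta([0,\infty))}=(-\infty,\delta_+]$ if $\liminf_{t\to\infty}p(t)=0$. (ii) If $d_\infty=+\infty$,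 then $\overline{\Delta([0,\infty))}=[\delta_-,\delta_+]$ if $\liminf_{t\to\infty}\frac{p(t)}{d(t)}>0$; and, in the case $\Delta([0,\infty))\ne\mathbb{R}$, there is $s\in\mathbb{R}$ such that $\overline{\Delta([0,\infty))}=[s,+\infty)$ if $\liminf_{t\to\infty}\frac{p(t)}{d(t)}=0$ and $\liminf_{t\to\infty}\big(p-\frac{|b|^2}{d}\big)(t)>0$, while $\overline{\Delta([0,\infty))}=(-\infty,s]$ if $\liminf_{t\to\infty}\frac{p(t)}{d(t)}=0$ and $\limsup_{t\to\infty}\big(p-\frac{|b|^2}{d}\big)(t)<0$. (iii) If $d_\infty=-\infty$, then $\overline{\Delta([0,\infty))}=(-\infty,\delta_+]$.
   Context: Notation: $\Delta(t):=d(t)-|b(t)|^2/p(t)$. For $t$ with $d(t)\ne\lambda$: $\pi(t,\lambda):=p(t)-\frac{|b(t)|^2}{d(t)-\lambda}$, $\rho(t,\lambda):=-\frac{2\operatorname{Im}(b(t)\overline{c(t)})}{d(t)-\lambda}+i\frac{\partial}{\partial t}\pi(t,\lambda)$, $\kappa(t,\lambda):=q(t)-\lambda-\frac{|c(t)|^2}{d(t)-\lambda}+\frac{\partial}{\partial t}\Big(\frac{\overline{b(t)}c(t)}{d(t)-\lambda}\Big)$. The set $\overline{\Delta([0,\infty))}$ is the regular part of the essential spectrum of every closed symmetric extension of the associated operator matrix. *)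

theory Defs
  imports "HOL-Analysis.Analysis"
begin

definition C1_on :: "real set \<Rightarrow> (real \<Rightarrow> 'a::real_normed_vector) \<Rightarrow> bool" where
  "C1_on S f \<longleftrightarrow> (\<exists>f'. (\<forall>t\<in>S. (f has_vector_derivative f' t) (at t within S))
                        \<and> continuous_on S f')"

definition C2_on :: "real set \<Rightarrow> (real \<Rightarrow> 'a::real_normed_vector) \<Rightarrow> bool" where
  "C2_on S f \<longleftrightarrow> (\<exists>f' f''. (\<forall>t\<in>S. (f has_vector_derivative f' t) (at t within S)
                                 \<and> (f' has_vector_derivative f'' t) (at t within S))
                        \<and> continuous_on S f'')"

definition Delta :: "(real \<Rightarrow> real) \<Rightarrow> (real \<Rightarrow> real) \<Rightarrow> (real \<Rightarrow> complex) \<Rightarrow> real \<Rightarrow> real" where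
  "Delta p d b t = d t - (cmod (b t))\<^sup>2 / p t"

definition piF :: "(real \<Rightarrow> real) \<Rightarrow> (real \<Rightarrow> real) \<Rightarrow> (real \<Rightarrow> complex) \<Rightarrow> real \<Rightarrow> real \<Rightarrow> real" where
  "piF p d b t lam = p t - (cmod (b t))\<^sup>2 / (d t - lam)"

definition rhoF :: "(real \<Rightarrow> real) \<Rightarrow> (real \<Rightarrow> real) \<Rightarrow> (real \<Rightarrow> complex) \<Rightarrow> (real \<Rightarrow> complex)
                    \<Rightarrow> real \<Rightarrow> real \<Rightarrow> complex" where
  "rhoF p d b c t lam =
     complex_of_real (- 2 * Im (b t * cnj (c t)) / (d t - lam))
     + \<i> * complex_of_real (vector_derivative (\<lambda>s. piF p d b s lam) (at t within {0..}))"

definition kappaF :: "(real \<Rightarrow> real) \<Rightarrow> (real \<Rightarrow> real) \<Rightarrow> (real \<Rightarrow> complex) \<Rightarrow> (real \<Rightarrow> complex)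
                    \<Rightarrow> (real \<Rightarrow> real) \<Rightarrow> real \<Rightarrow> real \<Rightarrow> complex" where
  "kappaF p d b c q t lam =
     complex_of_real (q t - lam - (cmod (c t))\<^sup>2 / (d t - lam))
     + vector_derivative (\<lambda>s. cnj (b s) * c s / complex_of_real (d s - lam)) (at t within {0..})"

end

theory Submission
  imports Defs
begin

(* Delta is continuous on [0,\<infinity>), so its range is an interval whose closure is determined
   by \<delta>- and \<delta>+; everything reduces to deciding which of the two are finite.
   Since Delta \<le> d, \<delta>+ is finite when d converges and \<delta>- = -\<infinity> when d \<rightarrow> -\<infinity>.
   If d is bounded and p bounded away from 0, (B2) bounds |b|\<^sup>2/p, so \<delta>- is finite.
   If liminf p = 0 but \<delta>- were finite, then for \<lambda> < \<delta>- we get 0 < \<pi>(\<cdot>,\<lambda>) \<le> p, and the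
   boundedness of 1/\<pi> from (B3b) would keep p away from 0.
   When d \<rightarrow> +\<infinity>, write Delta = (d/p)(p - |b|\<^sup>2/d): a finite \<delta>+ (resp. \<delta>-) together with
   p - |b|\<^sup>2/d eventually above a positive (resp. below a negative) constant would keep
   p/d away from 0. *)

lemma connected_real_mem_between:
  fixes S :: "real set"
  assumes "connected S" "Inf (ereal ` S) < ereal x" "ereal x < Sup (ereal ` S)"
  shows "x \<in> S"
proof -
  obtain y1 where y1: "y1 \<in> S" "y1 < x" using assms(2) by (auto simp: Inf_less_iff)
  obtain y2 where y2: "y2 \<in> S" "x < y2" using assms(3) by (auto simp: less_Sup_iff)
  show ?thesis using connectedD_interval[OF assms(1) y1(1) y2(1), of x] y1(2) y2(2) by simp
qed

lemma connected_real_eq_UNIV: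
  fixes S :: "real set"
  assumes "connected S" "Inf (ereal ` S) = -\<infinity>" "Sup (ereal ` S) = \<infinity>"
  shows "S = UNIV"
  using connected_real_mem_between[OF assms(1)] assms(2,3) by auto

lemma closure_connected_real:
  fixes S :: "real set"
  assumes "connected S"
  shows "closure S = {x. Inf (ereal ` S) \<le> ereal x \<and> ereal x \<le> Sup (ereal ` S)}"
    (is "_ = ?band")
proof
  have "closed ?band"
    by (intro closed_Collect_conj closed_Collect_le continuous_intros)
  then show "closure S \<subseteq> ?band"
    by (intro closure_minimal) (auto intro: INF_lower SUP_upper)
next
  show "?band \<subseteq> closure S"
  proof (intro subsetI iffD2[OF closure_approachable] allI impI)
    fix x e :: real
    assume x: "x \<in> ?band" and e: "0 < e"
    have "Inf (ereal ` S) < ereal (x + e)" using x e by (auto intro: order.strict_trans1)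
    then obtain y1 where y1: "y1 \<in> S" "y1 < x + e" by (auto simp: Inf_less_iff)
    have "ereal (x - e) < Sup (ereal ` S)"
      using order.strict_trans2[of "ereal (x - e)" "ereal x"] x e by auto
    then obtain y2 where y2: "y2 \<in> S" "x - e < y2" by (auto simp: less_Sup_iff)
    show "\<exists>y\<in>S. dist y x < e"
    proof (cases "x - e < y1 \<or> y2 < x + e")
      case True
      then have "dist y1 x < e \<or> dist y2 x < e" using y1 y2 by (auto simp: dist_real_def)
      then show ?thesis using y1(1) y2(1) by blast
    next
      case False
      then have "x \<in> S" using connectedD_interval[OF assms y1(1) y2(1), of x] e by auto
      then show ?thesis using e by (intro bexI[of _ x]) simp_all
    qed
  qed
qed

lemma bounded_image_atLeast_if_tendsto:
  fixes f :: "real \<Rightarrow> 'a::metric_space"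
  assumes "continuous_on {a..} f" and "(f \<longlongrightarrow> l) at_top"
  shows "bounded (f ` {a..})"
proof -
  obtain N where N: "\<And>t. t \<ge> N \<Longrightarrow> dist (f t) l < 1"
    using tendstoD[OF assms(2), of 1] by (auto simp: eventually_at_top_linorder)
  have "bounded (f ` {a..max a N})"
    by (intro compact_imp_bounded compact_continuous_image continuous_on_subset[OF assms(1)]) auto
  then have "bounded (f ` {a..max a N} \<union> ball l 1)" by simp
  moreover have "f ` {a..} \<subseteq> f ` {a..max a N} \<union> ball l 1"
  proof (rule image_subsetI)
    fix t assume "t \<in> {a..}"
    then show "f t \<in> f ` {a..max a N} \<union> ball l 1"
      using N[of t] by (cases "t \<le> max a N") (auto simp: dist_commute)
  qed
  ultimately show ?thesis by (rule bounded_subset)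
qed

lemma uniform_lower_bound_if_Liminf_pos:
  fixes f :: "real \<Rightarrow> real"
  assumes "continuous_on {a..} f" and "\<forall>t\<ge>a. 0 < f t"
    and "0 < Liminf at_top (\<lambda>t. ereal (f t))"
  shows "\<exists>e>0. \<forall>t\<ge>a. e \<le> f t"
proof -
  obtain c where c: "0 < ereal c" "ereal c < Liminf at_top (\<lambda>t. ereal (f t))"
    using ereal_dense2[OF assms(3)] by blast
  obtain N where N: "\<And>t. t \<ge> N \<Longrightarrow> c < f t"
    using less_LiminfD[OF c(2)] by (auto simp: eventually_at_top_linorder)
  have "continuous_on {a..max a N} f" by (rule continuous_on_subset[OF assms(1)]) auto
  then obtain t0 where t0: "t0 \<in> {a..max a N}" "\<forall>t\<in>{a..max a N}. f t0 \<le> f t"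
    using continuous_attains_inf[OF compact_Icc] by (metis atLeastatMost_empty_iff2 max.cobounded1)
  have "\<forall>t\<ge>a. min c (f t0) \<le> f t"
  proof (intro allI impI)
    fix t assume "a \<le> t"
    show "min c (f t0) \<le> f t"
    proof (cases "t \<le> max a N")
      case True
      then show ?thesis using t0(2) \<open>a \<le> t\<close> by (simp add: min.coboundedI2)
    next
      case False
      then have "c < f t" by (intro N) simp
      then show ?thesis by (simp add: min_le_iff_disj)
    qed
  qed
  moreover have "0 < min c (f t0)" using c t0 assms(2) by auto
  ultimately show ?thesis by blast
qed

lemma Liminf_inverse_pos_if_mult_bounded:
  fixes x g :: "'a \<Rightarrow> real"
  assumes "0 < c" and "eventually (\<lambda>t. 0 < x t) F" and "eventually (\<lambda>t. c < g t) F"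
    and "eventually (\<lambda>t. x t * g t \<le> M) F"
  shows "0 < Liminf F (\<lambda>t. ereal (1 / x t))"
proof -
  define M' where "M' = max M 1"
  have "eventually (\<lambda>t. ereal (c / M') \<le> ereal (1 / x t)) F"
    using assms(2-4)
  proof eventually_elim
    case (elim t)
    then have "x t * c < x t * g t" by simp
    then have "x t * c < M'" using elim unfolding M'_def by linarith
    then show ?case
      using elim(1) by (simp add: M'_def field_simps)
  qed
  then have "ereal (c / M') \<le> Liminf F (\<lambda>t. ereal (1 / x t))"
    by (rule Liminf_bounded)
  moreover have "0 < ereal (c / M')" using assms(1) by (simp add: M'_def)
  ultimately show ?thesis by (rule less_le_trans[rotated])
qed

lemma C2_on_imp_continuous_on: "C2_on S f \<Longrightarrow> continuous_on S f"
  unfolding C2_on_def continuous_on_eq_continuous_within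
  using has_vector_derivative_continuous by blast

lemma continuous_on_Delta:
  assumes "continuous_on S p" "continuous_on S d" "continuous_on S b" "\<forall>t\<in>S. p t \<noteq> 0"
  shows "continuous_on S (Delta p d b)"
  unfolding Delta_def[abs_def] using assms by (intro continuous_intros) auto

lemma Delta_le: "0 < p t \<Longrightarrow> Delta p d b t \<le> d t"
  by (simp add: Delta_def)

lemma Delta_eq_mult: "p t \<noteq> 0 \<Longrightarrow> d t \<noteq> 0 \<Longrightarrow>
    Delta p d b t = d t / p t * (p t - (cmod (b t))\<^sup>2 / d t)"
  by (simp add: Delta_def field_simps)

lemma piF_pos_le:
  assumes "0 < p t" and "lam < Delta p d b t"
  shows "0 < piF p d b t lam" and "piF p d b t lam \<le> p t"
proof -
  have b2: "(cmod (b t))\<^sup>2 = p t * (d t - Delta p d b t)"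
    using assms(1) by (simp add: Delta_def field_simps)
  have "0 \<le> d t - Delta p d b t" using Delta_le[of p t d b] assms(1) by simp
  moreover have "d t - Delta p d b t < d t - lam" using assms(2) by simp
  ultimately have "(cmod (b t))\<^sup>2 / (d t - lam) < p t"
    unfolding b2 using assms(1) by (simp add: field_simps)
  then show "0 < piF p d b t lam" by (simp add: piF_def)
  show "piF p d b t lam \<le> p t"
    using \<open>d t - Delta p d b t < d t - lam\<close> \<open>0 \<le> d t - Delta p d b t\<close> by (simp add: piF_def)
qed

lemma SUP_Delta_less_PInfty:
  assumes "bounded (d ` A)" and "\<forall>t\<in>A. 0 < p t"
  shows "(SUP t\<in>A. ereal (Delta p d b t)) < \<infinity>"
proof -
  obtain D where D: "\<forall>t\<in>A. \<bar>d t\<bar> \<le> D" using assms(1) by (auto simp: bounded_real)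
  have "Delta p d b t \<le> D" if "t \<in> A" for t
    using Delta_le[of p t d b] assms(2) D that by (meson abs_le_D1 order_trans)
  then have "(SUP t\<in>A. ereal (Delta p d b t)) \<le> ereal D"
    by (intro SUP_least) simp
  then show ?thesis by (rule le_less_trans) simp
qed

lemma INF_Delta_greater_MInfty:
  assumes "bounded (d ` A)" and "0 < e" and "\<forall>t\<in>A. e \<le> p t"
    and "\<forall>t\<in>A. cmod (b t) \<le> \<beta> * (\<bar>d t\<bar> + 1)"
  shows "-\<infinity> < (INF t\<in>A. ereal (Delta p d b t))"
proof -
  obtain D where D: "\<forall>t\<in>A. \<bar>d t\<bar> \<le> D" using assms(1) by (auto simp: bounded_real)
  have "- D - (\<bar>\<beta>\<bar> * (D + 1))\<^sup>2 / e \<le> Delta p d b t" if t: "t \<in> A" for t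
  proof -
    have "cmod (b t) \<le> \<beta> * (\<bar>d t\<bar> + 1)" using assms(4) t by blast
    also have "\<dots> \<le> \<bar>\<beta>\<bar> * (\<bar>d t\<bar> + 1)" by (intro mult_right_mono) auto
    also have "\<dots> \<le> \<bar>\<beta>\<bar> * (D + 1)" using D t by (intro mult_left_mono) auto
    finally have "(cmod (b t))\<^sup>2 \<le> (\<bar>\<beta>\<bar> * (D + 1))\<^sup>2"
      by (simp add: power_mono)
    then have "(cmod (b t))\<^sup>2 / p t \<le> (\<bar>\<beta>\<bar> * (D + 1))\<^sup>2 / e"
      using assms(2,3) t by (meson frac_le zero_le_power2)
    moreover have "- D \<le> d t" using D t by force
    ultimately show ?thesis unfolding Delta_def by linarith
  qed
  then have "ereal (- D - (\<bar>\<beta>\<bar> * (D + 1))\<^sup>2 / e) \<le> (INF t\<in>A. ereal (Delta p d b t))"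
    by (intro INF_greatest) auto
  then show ?thesis by (rule less_le_trans[rotated]) simp
qed

lemma INF_Delta_MInfty_if_Liminf_p_zero:
  fixes dinf :: ereal
  assumes p_pos: "\<forall>t\<ge>0. 0 < p t"
    and p_Liminf: "Liminf at_top (\<lambda>t. ereal (p t)) = 0"
    and inverse_pi_bounded: "\<forall>lam. ereal lam < (INF t\<in>{0..}. ereal (Delta p d b t)) \<and> ereal lam \<noteq> dinf
      \<longrightarrow> (\<exists>tl\<ge>0. bounded ((\<lambda>t. 1 / piF p d b t lam) ` {tl..}))"
  shows "(INF t\<in>{0..}. ereal (Delta p d b t)) = -\<infinity>"
proof (rule ccontr)
  let ?m = "INF t\<in>{0..}. ereal (Delta p d b t)"
  assume "?m \<noteq> -\<infinity>"
  moreover have "?m \<le> ereal (Delta p d b 0)" by (rule INF_lower) simp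
  ultimately obtain m where m: "?m = ereal m" by (cases ?m) auto
  obtain lam where lam: "lam < m" "ereal lam \<noteq> dinf"
  proof (cases "dinf = ereal (m - 1)")
    case True
    then show ?thesis using that[of "m - 2"] by simp
  next
    case False
    then show ?thesis using that[of "m - 1"] by simp
  qed
  then have "ereal lam < ?m" using m by simp
  then obtain tl where tl: "0 \<le> tl" "bounded ((\<lambda>t. 1 / piF p d b t lam) ` {tl..})"
    using inverse_pi_bounded lam(2) by blast
  then obtain B where B: "0 < B" "\<forall>x\<in>(\<lambda>t. 1 / piF p d b t lam) ` {tl..}. norm x \<le> B"
    unfolding bounded_pos by blast
  have "eventually (\<lambda>t. ereal (1 / B) \<le> ereal (p t)) at_top"
    using eventually_ge_at_top[of tl]
  proof eventually_elim
    case (elim t)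
    have "ereal m \<le> ereal (Delta p d b t)"
      unfolding m[symmetric] using elim tl(1) by (intro INF_lower) auto
    then have "lam < Delta p d b t" using lam(1) by simp
    then have pi: "0 < piF p d b t lam" "piF p d b t lam \<le> p t"
      using piF_pos_le[of p t lam d b] p_pos elim tl(1) by auto
    moreover have "norm (1 / piF p d b t lam) \<le> B" using B(2) elim by blast
    ultimately have "1 / B \<le> piF p d b t lam" using B(1) by (simp add: field_simps)
    then show ?case using pi(2) by simp
  qed
  then have "ereal (1 / B) \<le> 0" unfolding p_Liminf[symmetric] by (rule Liminf_bounded)
  then show False using B(1) by simp
qed

lemma SUP_Delta_PInfty_if_Liminf_ratio_zero:
  assumes p_pos: "\<forall>t\<ge>0. 0 < p t" and d_pos: "eventually (\<lambda>t. 0 < d t) at_top"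
    and ratio_Liminf: "Liminf at_top (\<lambda>t. ereal (p t / d t)) = 0"
    and Liminf_pos: "0 < Liminf at_top (\<lambda>t. ereal (p t - (cmod (b t))\<^sup>2 / d t))"
  shows "(SUP t\<in>{0..}. ereal (Delta p d b t)) = \<infinity>"
proof (rule ccontr)
  let ?M = "SUP t\<in>{0..}. ereal (Delta p d b t)"
  assume "?M \<noteq> \<infinity>"
  moreover have "ereal (Delta p d b 0) \<le> ?M" by (rule SUP_upper) simp
  ultimately obtain M where M: "?M = ereal M" by (cases ?M) auto
  obtain c where c: "0 < ereal c" "ereal c < Liminf at_top (\<lambda>t. ereal (p t - (cmod (b t))\<^sup>2 / d t))"
    using ereal_dense2[OF Liminf_pos] by blast
  have ev: "eventually (\<lambda>t. 0 \<le> t \<and> 0 < d t) at_top"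
    using eventually_ge_at_top[of 0] d_pos by eventually_elim simp
  have "0 < Liminf at_top (\<lambda>t. ereal (1 / (d t / p t)))"
  proof (rule Liminf_inverse_pos_if_mult_bounded)
    show "0 < c" using c(1) by simp
    show "eventually (\<lambda>t. c < p t - (cmod (b t))\<^sup>2 / d t) at_top"
      using less_LiminfD[OF c(2)] by simp
    show "eventually (\<lambda>t. 0 < d t / p t) at_top"
      using ev by eventually_elim (simp add: p_pos)
    show "eventually (\<lambda>t. d t / p t * (p t - (cmod (b t))\<^sup>2 / d t) \<le> M) at_top"
      using ev
    proof eventually_elim
      case (elim t)
      then have "ereal (Delta p d b t) \<le> ereal M" unfolding M[symmetric] by (intro SUP_upper) auto
      then show ?case using Delta_eq_mult[of p t d b] p_pos elim by auto
    qed
  qed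
  then show False using ratio_Liminf by simp
qed

lemma INF_Delta_MInfty_if_Limsup_negative:
  assumes p_pos: "\<forall>t\<ge>0. 0 < p t" and d_pos: "eventually (\<lambda>t. 0 < d t) at_top"
    and ratio_Liminf: "Liminf at_top (\<lambda>t. ereal (p t / d t)) = 0"
    and Limsup_neg: "Limsup at_top (\<lambda>t. ereal (p t - (cmod (b t))\<^sup>2 / d t)) < 0"
  shows "(INF t\<in>{0..}. ereal (Delta p d b t)) = -\<infinity>"
proof (rule ccontr)
  let ?m = "INF t\<in>{0..}. ereal (Delta p d b t)"
  assume "?m \<noteq> -\<infinity>"
  moreover have "?m \<le> ereal (Delta p d b 0)" by (rule INF_lower) simp
  ultimately obtain m where m: "?m = ereal m" by (cases ?m) auto
  obtain c where c: "ereal c < 0" "Limsup at_top (\<lambda>t. ereal (p t - (cmod (b t))\<^sup>2 / d t)) < ereal c"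
    using ereal_dense2[OF Limsup_neg] by blast
  have ev: "eventually (\<lambda>t. 0 \<le> t \<and> 0 < d t) at_top"
    using eventually_ge_at_top[of 0] d_pos by eventually_elim simp
  have "0 < Liminf at_top (\<lambda>t. ereal (1 / (d t / p t)))"
  proof (rule Liminf_inverse_pos_if_mult_bounded)
    show "0 < - c" using c(1) by simp
    show "eventually (\<lambda>t. - c < - (p t - (cmod (b t))\<^sup>2 / d t)) at_top"
      using Limsup_lessD[OF c(2)] by (auto elim: eventually_mono)
    show "eventually (\<lambda>t. 0 < d t / p t) at_top"
      using ev by eventually_elim (simp add: p_pos)
    show "eventually (\<lambda>t. d t / p t * - (p t - (cmod (b t))\<^sup>2 / d t) \<le> - m) at_top"
      using ev
    proof eventually_elim
      case (elim t)
      then have "ereal m \<le> ereal (Delta p d b t)" unfolding m[symmetric] by (intro INF_lower) auto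
      moreover have "d t / p t * - (p t - (cmod (b t))\<^sup>2 / d t) = - Delta p d b t"
        using Delta_eq_mult[of p t d b] p_pos[rule_format, of t] elim by (simp add: algebra_simps)
      ultimately show ?case by simp
    qed
  qed
  then show False using ratio_Liminf by simp
qed

lemma INF_Delta_MInfty_if_d_MInfty:
  assumes p_pos: "\<forall>t\<ge>0. 0 < p t" and d_lim: "((\<lambda>t. ereal (d t)) \<longlongrightarrow> -\<infinity>) at_top"
  shows "(INF t\<in>{0..}. ereal (Delta p d b t)) = -\<infinity>"
proof -
  have "eventually (\<lambda>t. (INF s\<in>{0..}. ereal (Delta p d b s)) \<le> ereal (d t)) at_top"
    using eventually_ge_at_top[of 0]
  proof eventually_elim
    case (elim t)
    have "(INF s\<in>{0..}. ereal (Delta p d b s)) \<le> ereal (Delta p d b t)"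
      using elim by (intro INF_lower) auto
    also have "\<dots> \<le> ereal (d t)" using Delta_le[of p t d b] p_pos elim by simp
    finally show ?case .
  qed
  with d_lim have "(INF s\<in>{0..}. ereal (Delta p d b s)) \<le> -\<infinity>"
    by (rule tendsto_le[OF trivial_limit_at_top_linorder _ tendsto_const])
  then show ?thesis by simp
qed

theorem proposition5p1:
  fixes p d q :: "real \<Rightarrow> real" and b c :: "real \<Rightarrow> complex" and dinf :: ereal
  assumes p_C2: "C2_on {0..} p" and d_C2: "C2_on {0..} d"
    and b_C2: "C2_on {0..} b" and c_C1: "C1_on {0..} c"
    and q_C0: "continuous_on {0..} q"
    and p_pos: "\<forall>t\<ge>0. p t > 0"
    and B1: "((\<lambda>t. ereal (d t)) \<longlongrightarrow> dinf) at_top"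
    and B2: "\<exists>\<beta>>0. \<exists>\<gamma>>0. \<forall>t\<ge>0. cmod (b t) \<le> \<beta> * (\<bar>d t\<bar> + 1) \<and> cmod (c t) \<le> \<gamma> * (\<bar>d t\<bar> + 1)"
    and B3a: "\<exists>lam. ereal lam \<noteq> dinf \<and> (\<exists>tl\<ge>0. lam \<notin> d ` {tl..}
                 \<and> bounded ((\<lambda>t. piF p d b t lam) ` {tl..}))"
    and B3b: "\<forall>lam. lam \<notin> closure (Delta p d b ` {0..}) \<and> ereal lam \<noteq> dinf \<longrightarrow>
                (\<exists>tl\<ge>0. lam \<notin> d ` {tl..}
                   \<and> bounded ((\<lambda>t. rhoF p d b c t lam) ` {tl..})
                   \<and> bounded ((\<lambda>t. kappaF p d b c q t lam) ` {tl..})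
                   \<and> (\<forall>t\<ge>tl. piF p d b t lam \<noteq> 0)
                   \<and> bounded ((\<lambda>t. 1 / piF p d b t lam) ` {tl..}))"
  defines "\<delta>m \<equiv> (INF t\<in>{0..}. ereal (Delta p d b t))"
    and "\<delta>p \<equiv> (SUP t\<in>{0..}. ereal (Delta p d b t))"
  shows
    "(\<bar>dinf\<bar> \<noteq> \<infinity> \<longrightarrow>
        \<bar>\<delta>p\<bar> \<noteq> \<infinity>
      \<and> (Liminf at_top (\<lambda>t. ereal (p t)) > 0 \<longrightarrow>
           \<bar>\<delta>m\<bar> \<noteq> \<infinity> \<and> closure (Delta p d b ` {0..}) = {real_of_ereal \<delta>m .. real_of_ereal \<delta>p})
      \<and> (Liminf at_top (\<lambda>t. ereal (p t)) = 0 \<longrightarrow>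
           closure (Delta p d b ` {0..}) = {.. real_of_ereal \<delta>p}))
   \<and> (dinf = \<infinity> \<longrightarrow>
        (Liminf at_top (\<lambda>t. ereal (p t / d t)) > 0 \<longrightarrow>
           closure (Delta p d b ` {0..}) = {x. \<delta>m \<le> ereal x \<and> ereal x \<le> \<delta>p})
      \<and> (Delta p d b ` {0..} \<noteq> UNIV \<longrightarrow>
           (Liminf at_top (\<lambda>t. ereal (p t / d t)) = 0
              \<and> Liminf at_top (\<lambda>t. ereal (p t - (cmod (b t))\<^sup>2 / d t)) > 0 \<longrightarrow>
              (\<exists>s. closure (Delta p d b ` {0..}) = {s..}))
         \<and> (Liminf at_top (\<lambda>t. ereal (p t / d t)) = 0
              \<and> Limsup at_top (\<lambda>t. ereal (p t - (cmod (b t))\<^sup>2 / d t)) < 0 \<longrightarrow>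
              (\<exists>s. closure (Delta p d b ` {0..}) = {..s}))))
   \<and> (dinf = - \<infinity> \<longrightarrow>
        closure (Delta p d b ` {0..}) = {x. ereal x \<le> \<delta>p})"
proof -
  have cont: "continuous_on {0..} p" "continuous_on {0..} d" "continuous_on {0..} b"
    using p_C2 d_C2 b_C2 by (simp_all add: C2_on_imp_continuous_on)
  have connected: "connected (Delta p d b ` {0..})"
    using cont p_pos by (intro connected_continuous_image continuous_on_Delta) auto
  have band: "closure (Delta p d b ` {0..}) = {x. \<delta>m \<le> ereal x \<and> ereal x \<le> \<delta>p}"
    using closure_connected_real[OF connected] by (simp add: \<delta>m_def \<delta>p_def image_image)
  have whole_line: "Delta p d b ` {0..} = UNIV" if "\<delta>m = -\<infinity>" "\<delta>p = \<infinity>"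
    using connected_real_eq_UNIV[OF connected] that by (simp add: \<delta>m_def \<delta>p_def image_image)
  have Delta0: "\<delta>m \<le> ereal (Delta p d b 0)" "ereal (Delta p d b 0) \<le> \<delta>p"
    unfolding \<delta>m_def \<delta>p_def by (auto intro: INF_lower SUP_upper)
  have inverse_pi_bounded: "\<forall>lam. ereal lam < \<delta>m \<and> ereal lam \<noteq> dinf \<longrightarrow>
      (\<exists>tl\<ge>0. bounded ((\<lambda>t. 1 / piF p d b t lam) ` {tl..}))"
  proof (intro allI impI)
    fix lam assume lam: "ereal lam < \<delta>m \<and> ereal lam \<noteq> dinf"
    then have "lam \<notin> closure (Delta p d b ` {0..})" unfolding band by auto
    then show "\<exists>tl\<ge>0. bounded ((\<lambda>t. 1 / piF p d b t lam) ` {tl..})" using B3b lam by blast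
  qed
  have d_bounded: "bounded (d ` {0..})" if "\<bar>dinf\<bar> \<noteq> \<infinity>"
    using B1 cont(2) that by (intro bounded_image_atLeast_if_tendsto[of 0 d "real_of_ereal dinf"]) auto
  have sup_finite: "\<delta>p < \<infinity>" if "\<bar>dinf\<bar> \<noteq> \<infinity>"
    unfolding \<delta>p_def using d_bounded[OF that] p_pos by (intro SUP_Delta_less_PInfty) auto
  have inf_finite: "-\<infinity> < \<delta>m" if "\<bar>dinf\<bar> \<noteq> \<infinity>" and p_Liminf: "0 < Liminf at_top (\<lambda>t. ereal (p t))"
  proof -
    obtain e where "0 < e" "\<forall>t\<ge>0. e \<le> p t"
      using uniform_lower_bound_if_Liminf_pos[OF cont(1) p_pos p_Liminf] by blast
    moreover obtain \<beta> where "\<forall>t\<ge>0. cmod (b t) \<le> \<beta> * (\<bar>d t\<bar> + 1)" using B2 by blast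
    ultimately show ?thesis
      unfolding \<delta>m_def using d_bounded[OF that(1)] by (intro INF_Delta_greater_MInfty) auto
  qed
  have inf_MInfty_p: "\<delta>m = -\<infinity>" if "Liminf at_top (\<lambda>t. ereal (p t)) = 0"
    using p_pos that inverse_pi_bounded unfolding \<delta>m_def by (rule INF_Delta_MInfty_if_Liminf_p_zero)
  have d_pos: "eventually (\<lambda>t. 0 < d t) at_top" if "dinf = \<infinity>"
  proof -
    have "((\<lambda>t. ereal (d t)) \<longlongrightarrow> \<infinity>) at_top" using B1 that by simp
    then have "eventually (\<lambda>t. ereal 0 < ereal (d t)) at_top" unfolding tendsto_PInfty by blast
    then show ?thesis by simp
  qed
  have sup_PInfty: "\<delta>p = \<infinity>" if "dinf = \<infinity>" "Liminf at_top (\<lambda>t. ereal (p t / d t)) = 0"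
    "0 < Liminf at_top (\<lambda>t. ereal (p t - (cmod (b t))\<^sup>2 / d t))"
    unfolding \<delta>p_def using p_pos d_pos that by (intro SUP_Delta_PInfty_if_Liminf_ratio_zero) auto
  have inf_MInfty_ratio: "\<delta>m = -\<infinity>" if "dinf = \<infinity>" "Liminf at_top (\<lambda>t. ereal (p t / d t)) = 0"
    "Limsup at_top (\<lambda>t. ereal (p t - (cmod (b t))\<^sup>2 / d t)) < 0"
    unfolding \<delta>m_def using p_pos d_pos that by (intro INF_Delta_MInfty_if_Limsup_negative) auto
  have inf_MInfty_d: "\<delta>m = -\<infinity>" if "dinf = -\<infinity>"
    unfolding \<delta>m_def using p_pos B1 that by (intro INF_Delta_MInfty_if_d_MInfty) auto
  show ?thesis
    unfolding band
    using Delta0 whole_line sup_finite inf_finite inf_MInfty_p sup_PInfty inf_MInfty_ratio inf_MInfty_d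
    by (cases \<delta>m; cases \<delta>p) auto
qed

end
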